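(* Let $S$ be a semigroup generated by a finite set $A$. Then $S$ is right simple if and only if the semimetric space $(S,d_A)$ is quasi-metric.
   Context: $d_A(x,y)=\inf\{|w|:w\in A^*,\ xw=y\}$, where $A^*$ is the free monoid on $A$ (empty word allowed) and $\inf\emptyset=\infty$. A semigroup is right simple if it has a single $\mathcal{R}$-class, i.e. $xS^1=yS^1$ for all $x,y\in S$ ($S^1$ being $S$ with an identity adjoined). A semimetric space $(X,d)$ (distance values in $\mathbb{R}^{\ge0}\cup\{\infty\}$, zero exactly on the diagonal, triangle inequality, not necessarily symmetric) is quasi-metric if it is strongly connected (no two points at distance $\infty$) and there exist $1\le\lambda<\infty$, $0\le\epsilon<\infty$ with $d(y,x)\le\lambda d(x,y)+\epsilon$ for all $x,y\in X$. *)

theory Defs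
  imports "HOL-Library.Extended_Nonnegative_Real"
begin

inductive_set sgen :: "'a::semigroup_mult set \<Rightarrow> 'a set" for A where
  base: "a \<in> A \<Longrightarrow> a \<in> sgen A"
| step: "x \<in> sgen A \<Longrightarrow> a \<in> A \<Longrightarrow> x * a \<in> sgen A"

definition act :: "'a::semigroup_mult \<Rightarrow> 'a list \<Rightarrow> 'a" where
  "act x w = foldl (*) x w"

text \<open>d_A(x,y) = inf{|w| : w in A*, xw = y}, inf of empty set = infinity.\<close>
definition dA :: "'a::semigroup_mult set \<Rightarrow> 'a \<Rightarrow> 'a \<Rightarrow> ennreal" where
  "dA A x y = (INF w \<in> {w. set w \<subseteq> A \<and> act x w = y}. of_nat (length w))"

definition right_ideal1 :: "'a::semigroup_mult \<Rightarrow> 'a set" where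
  "right_ideal1 x = insert x (range (\<lambda>s. x * s))"

definition right_simple :: "'a::semigroup_mult itself \<Rightarrow> bool" where
  "right_simple _ = (\<forall>x y :: 'a. right_ideal1 x = right_ideal1 y)"

definition semimetric :: "'b set \<Rightarrow> ('b \<Rightarrow> 'b \<Rightarrow> ennreal) \<Rightarrow> bool" where
  "semimetric X d = ((\<forall>x\<in>X. \<forall>y\<in>X. d x y = 0 \<longleftrightarrow> x = y) \<and>
     (\<forall>x\<in>X. \<forall>y\<in>X. \<forall>z\<in>X. d x z \<le> d x y + d y z))"

definition quasi_metric :: "'b set \<Rightarrow> ('b \<Rightarrow> 'b \<Rightarrow> ennreal) \<Rightarrow> bool" where
  "quasi_metric X d = (semimetric X d \<and> (\<forall>x\<in>X. \<forall>y\<in>X. d x y \<noteq> \<infinity>) \<and>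
     (\<exists>lam eps :: real. 1 \<le> lam \<and> 0 \<le> eps \<and>
        (\<forall>x\<in>X. \<forall>y\<in>X. d y x \<le> ennreal lam * d x y + ennreal eps)))"

end

theory Submission
  imports Defs
begin

text \<open>
  For a generating set A, the point y is reachable from x by right multiplication with letters
  exactly when y \<in> x S^1, so right simplicity means that all distances d_A(x, y) are finite.
  In that case the way back from x a to x is short uniformly in x: writing x = z b with b \<in> A
  (or x = b), left multiplication by z shows d_A(x a, x) \<le> d_A(b a, b), and there are only
  finitely many pairs (b, a) \<in> A \<times> A. Walking back along a shortest word from x to y letter
  by letter then gives d_A(y, x) \<le> K d_A(x, y) for a finite constant K.
\<close>

lemma act_Nil [simp]: "act x [] = x"
  by (simp add: act_def)

lemma act_append: "act x (u @ v) = act (act x u) v"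
  by (simp add: act_def)

lemma act_snoc: "act x (u @ [a]) = act x u * a"
  by (simp add: act_def)

lemma act_mult_left: "act (z * y) w = z * act y w"
  by (induction w arbitrary: y) (simp_all add: act_def mult.assoc)

lemma act_Cons: "act x (a # w) = x * act a w"
  using act_mult_left[of x a w] by (simp add: act_def)

lemma sgen_eq_act:
  assumes "s \<in> sgen A"
  obtains a w where "a \<in> A" "set w \<subseteq> A" "s = act a w"
  using assms
proof (induction arbitrary: thesis rule: sgen.induct)
  case (base a)
  then show ?case by (intro base.prems[of a "[]"]) simp_all
next
  case (step x b)
  then obtain a w where "a \<in> A" "set w \<subseteq> A" "x = act a w" by blast
  with step.hyps(2) show ?case by (intro step.prems[of a "w @ [b]"]) (simp_all add: act_snoc)
qed

lemma dA_le: "set w \<subseteq> A \<Longrightarrow> act x w = y \<Longrightarrow> dA A x y \<le> of_nat (length w)"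
  unfolding dA_def by (rule INF_lower2[of w]) auto

lemma dA_eq_top_iff: "dA A x y = \<infinity> \<longleftrightarrow> (\<nexists>w. set w \<subseteq> A \<and> act x w = y)"
proof
  assume "dA A x y = \<infinity>"
  show "\<nexists>w. set w \<subseteq> A \<and> act x w = y"
  proof
    assume "\<exists>w. set w \<subseteq> A \<and> act x w = y"
    then obtain w where "set w \<subseteq> A" "act x w = y" by blast
    then have "dA A x y \<le> of_nat (length w)" by (rule dA_le)
    with \<open>dA A x y = \<infinity>\<close> show False
      by (simp add: top_unique)
  qed
qed (simp add: dA_def)

lemma dA_attained:
  assumes "dA A x y \<noteq> \<infinity>"
  obtains w where "set w \<subseteq> A" "act x w = y" "dA A x y = of_nat (length w)"
proof -
  define P where "P n \<longleftrightarrow> (\<exists>w. set w \<subseteq> A \<and> act x w = y \<and> length w = n)" for n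
  have "\<exists>n. P n"
    using assms unfolding P_def dA_eq_top_iff by blast
  from LeastI_ex[OF this] obtain w
    where w: "set w \<subseteq> A" "act x w = y" "length w = (LEAST n. P n)"
    unfolding P_def by blast
  have "of_nat (length w) \<le> dA A x y"
    unfolding dA_def
  proof (rule INF_greatest)
    fix v assume "v \<in> {w. set w \<subseteq> A \<and> act x w = y}"
    then have "length w \<le> length v"
      unfolding w(3) P_def by (auto intro: Least_le)
    then show "of_nat (length w) \<le> (of_nat (length v) :: ennreal)" by simp
  qed
  with dA_le[OF w(1,2)] have "dA A x y = of_nat (length w)" by (rule antisym)
  with w that show thesis by blast
qed

lemma dA_eq_0_iff: "dA A x y = 0 \<longleftrightarrow> x = y"
proof
  assume d: "dA A x y = 0"
  then obtain w where "act x w = y" "dA A x y = of_nat (length w)"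
    using dA_attained[of A x y] by force
  with d show "x = y" by simp
qed (use dA_le[of "[]" A x x] in simp)

lemma dA_self [simp]: "dA A x x = 0"
  by (simp add: dA_eq_0_iff)

lemma dA_triangle: "dA A x z \<le> dA A x y + dA A y z"
proof (cases "dA A x y = \<infinity> \<or> dA A y z = \<infinity>")
  case False
  then obtain u v where u: "set u \<subseteq> A" "act x u = y" "dA A x y = of_nat (length u)"
    and v: "set v \<subseteq> A" "act y v = z" "dA A y z = of_nat (length v)"
    by (metis dA_attained)
  have "dA A x z \<le> of_nat (length (u @ v))"
    using u v by (intro dA_le) (auto simp: act_append)
  with u v show ?thesis by simp
qed auto

lemma semimetric_dA: "semimetric UNIV (dA A)"
  unfolding semimetric_def by (simp add: dA_eq_0_iff dA_triangle)

lemma dA_mult_left_le: "dA A (z * x) (z * y) \<le> dA A x y"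
  unfolding dA_def by (rule INF_superset_mono) (auto simp: act_mult_left)

lemma dA_neq_top_iff_right_ideal1:
  assumes "sgen A = UNIV"
  shows "dA A x y \<noteq> \<infinity> \<longleftrightarrow> y \<in> right_ideal1 x"
proof
  assume "dA A x y \<noteq> \<infinity>"
  then obtain w where "act x w = y"
    unfolding dA_eq_top_iff by blast
  then show "y \<in> right_ideal1 x"
    by (cases w) (auto simp: right_ideal1_def act_Cons)
next
  assume "y \<in> right_ideal1 x"
  then consider "y = x" | s where "y = x * s"
    unfolding right_ideal1_def by blast
  then show "dA A x y \<noteq> \<infinity>"
  proof cases
    case 1
    then show ?thesis by simp
  next
    case (2 s)
    obtain a w where "a \<in> A" "set w \<subseteq> A" "s = act a w"
      using sgen_eq_act[of s A] assms by blast
    with 2 show ?thesis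
      unfolding dA_eq_top_iff by (auto intro!: exI[of _ "a # w"] simp: act_Cons)
  qed
qed

lemma right_ideal1_trans: "y \<in> right_ideal1 x \<Longrightarrow> right_ideal1 y \<subseteq> right_ideal1 x"
  by (auto simp: right_ideal1_def mult.assoc)

lemma right_simple_iff_right_ideal1:
  "right_simple TYPE('a::semigroup_mult) \<longleftrightarrow> (\<forall>x y :: 'a. y \<in> right_ideal1 x)"
  unfolding right_simple_def
  by (metis antisym insertI1 right_ideal1_def right_ideal1_trans)

lemma dA_act_back_le:
  assumes back_step: "\<And>x a. a \<in> A \<Longrightarrow> dA A (x * a) x \<le> K"
    and "set w \<subseteq> A"
  shows "dA A (act x w) x \<le> K * of_nat (length w)"
  using \<open>set w \<subseteq> A\<close>
proof (induction w rule: rev_induct)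
  case (snoc a u)
  have "dA A (act x (u @ [a])) x \<le> dA A (act x u * a) (act x u) + dA A (act x u) x"
    by (simp add: act_snoc dA_triangle)
  also have "\<dots> \<le> K + K * of_nat (length u)"
    using snoc back_step by (intro add_mono) auto
  finally show ?case by (simp add: distrib_left add.commute)
qed simp

lemma dA_reverse_le:
  assumes "\<And>x a. a \<in> A \<Longrightarrow> dA A (x * a) x \<le> K"
    and "dA A x y \<noteq> \<infinity>"
  shows "dA A y x \<le> K * dA A x y"
proof -
  obtain w where "set w \<subseteq> A" "act x w = y" "dA A x y = of_nat (length w)"
    using dA_attained[OF assms(2)] .
  with dA_act_back_le[OF assms(1)] show ?thesis by metis
qed

lemma bounded_back_steps:
  assumes "finite A" "sgen A = UNIV" and connected: "\<And>x y. dA A x y \<noteq> \<infinity>"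
  obtains K where "K < \<infinity>" "\<And>x a. a \<in> A \<Longrightarrow> dA A (x * a) x \<le> K"
proof
  define K where "K = (\<Sum>(b, a) \<in> A \<times> A. dA A (b * a) b)"
  show "K < \<infinity>"
    unfolding K_def using assms(1) connected by (simp add: ennreal_sum_less_top top.not_eq_extremum)
  fix x a assume "a \<in> A"
  have "\<exists>b \<in> A. dA A (x * a) x \<le> dA A (b * a) b"
  proof -
    have "x \<in> sgen A" using assms(2) by simp
    then show ?thesis
    proof cases
      case (step z b)
      then show ?thesis using dA_mult_left_le[of A z "b * a" b] by (auto simp: mult.assoc)
    qed auto
  qed
  then obtain b where "b \<in> A" and x_back: "dA A (x * a) x \<le> dA A (b * a) b" by blast
  have "dA A (b * a) b \<le> K"
    unfolding K_def using assms(1) \<open>b \<in> A\<close> \<open>a \<in> A\<close>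
    by (intro member_le_sum[of "(b, a)" "A \<times> A" "\<lambda>(b, a). dA A (b * a) b", simplified]) auto
  with x_back show "dA A (x * a) x \<le> K" by (rule order_trans)
qed

lemma quasi_metric_dA_iff:
  assumes "finite A" "sgen A = UNIV"
  shows "quasi_metric UNIV (dA A) \<longleftrightarrow> (\<forall>x y. dA A x y \<noteq> \<infinity>)"
proof
  assume connected: "\<forall>x y. dA A x y \<noteq> \<infinity>"
  then obtain K where "K < \<infinity>" and back_step: "\<And>x a. a \<in> A \<Longrightarrow> dA A (x * a) x \<le> K"
    using bounded_back_steps[OF assms] by blast
  define lam where "lam = max 1 (enn2real K)"
  have "K = ennreal (enn2real K)"
    using \<open>K < \<infinity>\<close> by simp
  also have "\<dots> \<le> ennreal lam"
    unfolding lam_def by (rule ennreal_leI) simp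
  finally have "K \<le> ennreal lam" .
  have "dA A y x \<le> ennreal lam * dA A x y + ennreal 0" for x y
  proof -
    have "dA A y x \<le> K * dA A x y"
      using dA_reverse_le[OF back_step] connected by blast
    also have "\<dots> \<le> ennreal lam * dA A x y"
      using \<open>K \<le> ennreal lam\<close> by (rule mult_right_mono) simp
    finally show ?thesis by simp
  qed
  moreover have "1 \<le> lam" unfolding lam_def by simp
  ultimately show "quasi_metric UNIV (dA A)"
    unfolding quasi_metric_def using semimetric_dA connected by blast
qed (simp add: quasi_metric_def)

theorem proposition8p2:
  fixes A :: "'a::semigroup_mult set"
  assumes "finite A" and "sgen A = UNIV"
  shows "right_simple TYPE('a) \<longleftrightarrow> quasi_metric UNIV (dA A)"
  unfolding quasi_metric_dA_iff[OF assms] right_simple_iff_right_ideal1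
    dA_neq_top_iff_right_ideal1[OF assms(2)] ..

end
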